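(* Let $f \in \mathbb{R}[x_1,\ldots,x_n]$ be a nonzero polynomial. Then there is a monomial $m$ occurring in $f$ (i.e. with nonzero coefficient in $f$) such that $\dim \partial^{=k} f \geq \dim \partial^{=k} m$ for every integer $k \geq 0$. In particular, if every monomial occurring in $f$ contains at least $r$ distinct variables, then $\dim \partial^{=k} f \geq \binom{r}{k}$ for every $k$.
   Context: For $\beta=(\beta_1,\ldots,\beta_n)\in\mathbb{N}^n$, $\partial_\beta f$ denotes the partial derivative of $f$ obtained by differentiating $\beta_i$ times with respect to $x_i$ for each $i$. For $k\ge 0$, $\partial^{=k} f$ denotes the real linear space spanned by all $\partial_\beta f$ with $\beta_1+\cdots+\beta_n=k$. The dimension $\dim \partial^{=k} m$ for a monomial $m$ is defined in the same way (it does not depend on the nonzero scalar multiple of $m$). *)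

theory Defs
  imports "HOL-Analysis.Analysis" "HOL-Analysis.Finite_Function_Topology"
begin

(* Real polynomials in variables x_0, x_1, ... are represented as finitely supported
  maps from exponent vectors (finitely supported nat-valued maps) to real coefficients.*)

type_synonym rpoly = "(nat \<Rightarrow>\<^sub>0 nat) \<Rightarrow>\<^sub>0 real"

definition in_vars :: "nat \<Rightarrow> rpoly \<Rightarrow> bool" where
  "in_vars n f \<longleftrightarrow> (\<forall>\<gamma>\<in>Poly_Mapping.keys f. Poly_Mapping.keys \<gamma> \<subseteq> {..<n})"

definition mdeg :: "(nat \<Rightarrow>\<^sub>0 nat) \<Rightarrow> nat" where
  "mdeg \<beta> = (\<Sum>i\<in>Poly_Mapping.keys \<beta>. Poly_Mapping.lookup \<beta> i)"

definition pderiv_multi :: "(nat \<Rightarrow>\<^sub>0 nat) \<Rightarrow> rpoly \<Rightarrow> rpoly" where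
  "pderiv_multi \<beta> f = Abs_poly_mapping (\<lambda>\<alpha>.
      (\<Prod>i\<in>Poly_Mapping.keys \<beta>. fact (Poly_Mapping.lookup \<alpha> i + Poly_Mapping.lookup \<beta> i) / fact (Poly_Mapping.lookup \<alpha> i)) * Poly_Mapping.lookup f (\<alpha> + \<beta>))"

definition partials_eq :: "nat \<Rightarrow> nat \<Rightarrow> rpoly \<Rightarrow> rpoly set" where
  "partials_eq n k f = span {pderiv_multi \<beta> f | \<beta>. Poly_Mapping.keys \<beta> \<subseteq> {..<n} \<and> mdeg \<beta> = k}"

definition monom_of :: "(nat \<Rightarrow>\<^sub>0 nat) \<Rightarrow> rpoly" where
  "monom_of \<gamma> = Poly_Mapping.single \<gamma> 1"

end

theory Submission
  imports Defs
begin

text \<open>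
  Let \<open>\<alpha>\<close> be the largest exponent of \<open>f\<close> in a linear order on exponents compatible with
  addition (here the lexicographic order of \<open>Poly_Mapping\<close>). For every \<open>\<beta>\<close> with
  \<open>x\<^sup>\<beta> | x\<^sup>\<alpha>\<close> the derivative \<open>\<partial>\<^sub>\<beta> f\<close> contains \<open>x\<^sup>\<alpha>\<^sup>-\<^sup>\<beta>\<close>, whereas for \<open>\<beta>' > \<beta>\<close> it cannot, since
  \<open>\<alpha> - \<beta> + \<beta>' > \<alpha>\<close>. So the derivatives \<open>\<partial>\<^sub>\<beta> f\<close> with \<open>|\<beta>| = k\<close> and \<open>x\<^sup>\<beta> | x\<^sup>\<alpha>\<close> form a
  triangular, hence independent, family, and their number bounds \<open>dim \<partial>\<^sup>=\<^sup>k x\<^sup>\<alpha>\<close> from above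
  and \<open>card (keys \<alpha>) choose k\<close> from below.
\<close>

lemma lookup_scaleR_poly_mapping:
  "Poly_Mapping.lookup (r *\<^sub>R x) i = r *\<^sub>R Poly_Mapping.lookup (x :: 'a \<Rightarrow>\<^sub>0 'b::real_vector) i"
  unfolding scaleR_poly_mapping_def
  by (subst lookup_Abs_poly_mapping) (auto intro: finite_subset[OF _ finite_keys[of x]] simp: in_keys_iff)

lemma independent_triangular_family:
  fixes v :: "'i::linorder \<Rightarrow> 'k \<Rightarrow>\<^sub>0 real" and p :: "'i \<Rightarrow> 'k"
  assumes diag: "\<And>i. i \<in> I \<Longrightarrow> Poly_Mapping.lookup (v i) (p i) \<noteq> 0"
    and upper: "\<And>i j. i \<in> I \<Longrightarrow> j \<in> I \<Longrightarrow> i < j \<Longrightarrow> Poly_Mapping.lookup (v j) (p i) = 0"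
  shows "inj_on v I" and "independent (v ` I)"
proof -
  show inj: "inj_on v I"
    by (rule inj_onI) (metis diag upper linorder_neqE)
  show "independent (v ` I)"
    unfolding real_vector.independent_explicit_finite_subsets
  proof (intro allI impI ballI)
    fix t u w
    assume t: "t \<subseteq> v ` I" "finite t" and combination: "(\<Sum>w\<in>t. u w *\<^sub>R w) = 0" and "w \<in> t"
    show "u w = 0"
    proof (rule ccontr)
      assume "u w \<noteq> 0"
      define T where "T = {i \<in> I. v i \<in> t \<and> u (v i) \<noteq> 0}"
      have "finite T"
        unfolding T_def by (rule finite_subset[OF _ finite_vimage_IntI[OF t(2) inj]]) auto
      moreover have "T \<noteq> {}"
        using \<open>w \<in> t\<close> \<open>u w \<noteq> 0\<close> t(1) unfolding T_def by blast
      ultimately obtain i where i: "i \<in> T" and least: "\<And>j. j \<in> T \<Longrightarrow> i \<le> j"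
        using Min_in Min_le by blast
      have others: "u w' * Poly_Mapping.lookup w' (p i) = 0" if w': "w' \<in> t - {v i}" for w'
      proof -
        obtain j where j: "j \<in> I" "w' = v j" using w' t(1) by blast
        show ?thesis
        proof (cases "u w' = 0")
          case False
          then have "j \<in> T" using w' j unfolding T_def by blast
          with least have "i < j" using w' j by (metis Diff_iff insertI1 order_le_less)
          then show ?thesis using upper i j unfolding T_def by simp
        qed simp
      qed
      have "v i \<in> t" using i unfolding T_def by blast
      have "0 = Poly_Mapping.lookup (\<Sum>w'\<in>t. u w' *\<^sub>R w') (p i)"
        using combination by simp
      also have "\<dots> = (\<Sum>w'\<in>t. u w' * Poly_Mapping.lookup w' (p i))"
        by (simp add: lookup_sum lookup_scaleR_poly_mapping)
      also have "\<dots> = u (v i) * Poly_Mapping.lookup (v i) (p i)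
          + (\<Sum>w'\<in>t - {v i}. u w' * Poly_Mapping.lookup w' (p i))"
        by (rule sum.remove[OF t(2) \<open>v i \<in> t\<close>])
      also have "(\<Sum>w'\<in>t - {v i}. u w' * Poly_Mapping.lookup w' (p i)) = 0"
        using others by (rule sum.neutral[OF ballI])
      finally show False using diag i unfolding T_def by simp
    qed
  qed
qed

lemma card_le_dim_if_independent_in_span:
  fixes A G :: "'a::real_vector set"
  assumes "finite G" "A \<subseteq> span G" "independent A"
  shows "card A \<le> dim G"
proof -
  obtain B where B: "A \<subseteq> B" "B \<subseteq> span G" "independent B" "span G \<subseteq> span B"
    using real_vector.maximal_independent_subset_extend[OF assms(2,3)] by blast
  have "finite B"
    using real_vector.independent_span_bound[OF assms(1) B(3,2)] by blast
  moreover have "span B = span G"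
    using B(2,4) by (metis real_vector.span_mono real_vector.span_span subset_antisym)
  then have "dim G = card B"
    by (rule real_vector.dim_eq_card[OF _ B(3)])
  ultimately show ?thesis
    using B(1) by (simp add: card_mono)
qed

lemma finite_bounded_poly_mappings:
  assumes "finite S"
  shows "finite {\<beta> :: 'a \<Rightarrow>\<^sub>0 nat. Poly_Mapping.keys \<beta> \<subseteq> S \<and> (\<forall>i. Poly_Mapping.lookup \<beta> i \<le> c)}"
proof (rule inj_on_finite[where f = "\<lambda>\<beta>. restrict (Poly_Mapping.lookup \<beta>) S"])
  show "inj_on (\<lambda>\<beta>. restrict (Poly_Mapping.lookup \<beta>) S)
          {\<beta>. Poly_Mapping.keys \<beta> \<subseteq> S \<and> (\<forall>i. Poly_Mapping.lookup \<beta> i \<le> c)}"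
  proof (rule inj_onI, rule poly_mapping_eqI)
    fix \<beta> \<gamma> i
    assume "\<beta> \<in> {\<beta>. Poly_Mapping.keys \<beta> \<subseteq> S \<and> (\<forall>i. Poly_Mapping.lookup \<beta> i \<le> c)}"
      and "\<gamma> \<in> {\<beta>. Poly_Mapping.keys \<beta> \<subseteq> S \<and> (\<forall>i. Poly_Mapping.lookup \<beta> i \<le> c)}"
      and "restrict (Poly_Mapping.lookup \<beta>) S = restrict (Poly_Mapping.lookup \<gamma>) S"
    then show "Poly_Mapping.lookup \<beta> i = Poly_Mapping.lookup \<gamma> i"
      by (cases "i \<in> S") (auto dest: fun_cong[of _ _ i], metis in_keys_iff subsetD)
  qed
  show "(\<lambda>\<beta>. restrict (Poly_Mapping.lookup \<beta>) S) `
          {\<beta>. Poly_Mapping.keys \<beta> \<subseteq> S \<and> (\<forall>i. Poly_Mapping.lookup \<beta> i \<le> c)} \<subseteq> PiE S (\<lambda>_. {..c})"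
    by auto
qed (simp add: assms finite_PiE)

lemma lookup_le_mdeg: "Poly_Mapping.lookup \<beta> i \<le> mdeg \<beta>"
  unfolding mdeg_def by (cases "i \<in> Poly_Mapping.keys \<beta>") (auto intro: member_le_sum simp: in_keys_iff)

lemma finite_exponents_of_degree:
  "finite {\<beta> :: nat \<Rightarrow>\<^sub>0 nat. Poly_Mapping.keys \<beta> \<subseteq> {..<n} \<and> mdeg \<beta> = k}"
  by (rule finite_subset[OF _ finite_bounded_poly_mappings[of "{..<n}" k]])
    (auto intro: order_trans[OF lookup_le_mdeg])

text \<open>The pointwise bound \<open>\<beta> \<le> \<alpha>\<close> says that \<open>x\<^sup>\<beta>\<close> divides \<open>x\<^sup>\<alpha>\<close>.\<close>

definition divisors_of_degree :: "nat \<Rightarrow> (nat \<Rightarrow>\<^sub>0 nat) \<Rightarrow> (nat \<Rightarrow>\<^sub>0 nat) set" where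
  "divisors_of_degree k \<alpha> = {\<beta>. mdeg \<beta> = k \<and> (\<forall>i. Poly_Mapping.lookup \<beta> i \<le> Poly_Mapping.lookup \<alpha> i)}"

lemma keys_subset_if_divisor:
  "\<beta> \<in> divisors_of_degree k \<alpha> \<Longrightarrow> Poly_Mapping.keys \<beta> \<subseteq> Poly_Mapping.keys \<alpha>"
  unfolding divisors_of_degree_def by (auto simp: in_keys_iff) (meson less_le_trans)

lemma diff_add_divisor:
  "\<beta> \<in> divisors_of_degree k \<alpha> \<Longrightarrow> \<alpha> - \<beta> + \<beta> = \<alpha>"
  unfolding divisors_of_degree_def by (intro poly_mapping_eqI) (simp add: lookup_add lookup_minus)

lemma finite_divisors_of_degree: "finite (divisors_of_degree k \<alpha>)"
proof -
  have "Poly_Mapping.keys \<beta> \<subseteq> Poly_Mapping.keys \<alpha> \<and> (\<forall>i. Poly_Mapping.lookup \<beta> i \<le> k)"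
    if "\<beta> \<in> divisors_of_degree k \<alpha>" for \<beta>
    using that keys_subset_if_divisor[OF that] lookup_le_mdeg[of \<beta>]
    by (simp add: divisors_of_degree_def)
  then show ?thesis
    by (intro finite_subset[OF _ finite_bounded_poly_mappings[of "Poly_Mapping.keys \<alpha>" k]]) auto
qed

lemma binomial_le_card_divisors_of_degree:
  "card (Poly_Mapping.keys \<alpha>) choose k \<le> card (divisors_of_degree k \<alpha>)"
proof -
  define indicator_pm :: "nat set \<Rightarrow> nat \<Rightarrow>\<^sub>0 nat"
    where "indicator_pm S = (\<Sum>i\<in>S. Poly_Mapping.single i 1)" for S
  let ?subsets = "{S. S \<subseteq> Poly_Mapping.keys \<alpha> \<and> card S = k}"
  have lookup_indicator: "Poly_Mapping.lookup (indicator_pm S) = (\<lambda>i. if i \<in> S then 1 else 0)"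
    if "finite S" for S
    using that by (simp add: indicator_pm_def lookup_sum lookup_single when_def fun_eq_iff)
  have "inj_on indicator_pm ?subsets"
  proof (rule inj_onI)
    fix S T assume "S \<in> ?subsets" "T \<in> ?subsets" "indicator_pm S = indicator_pm T"
    then have "(\<lambda>i. if i \<in> S then 1 else 0 :: nat) = (\<lambda>i. if i \<in> T then 1 else 0)"
      using lookup_indicator finite_subset[OF _ finite_keys] by (metis mem_Collect_eq)
    then show "S = T"
      by (auto simp: fun_eq_iff split: if_splits)
  qed
  moreover have "indicator_pm S \<in> divisors_of_degree k \<alpha>" if "S \<in> ?subsets" for S
  proof -
    have S: "S \<subseteq> Poly_Mapping.keys \<alpha>" "card S = k"
      using that by auto
    note lookup_S = lookup_indicator[OF finite_subset[OF S(1) finite_keys]]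
    have keys_S: "Poly_Mapping.keys (indicator_pm S) = S"
      by (auto simp: in_keys_iff lookup_S split: if_splits)
    have "mdeg (indicator_pm S) = k"
      unfolding mdeg_def keys_S lookup_S using S(2) by simp
    moreover have "Poly_Mapping.lookup (indicator_pm S) i \<le> Poly_Mapping.lookup \<alpha> i" for i
      using S(1) by (auto simp: lookup_S in_keys_iff Suc_leI)
    ultimately show ?thesis
      unfolding divisors_of_degree_def by blast
  qed
  ultimately have "card ?subsets \<le> card (divisors_of_degree k \<alpha>)"
    by (intro card_inj_on_le finite_divisors_of_degree) auto
  then show ?thesis
    by (simp add: n_subsets)
qed

lemma lookup_pderiv_multi:
  "Poly_Mapping.lookup (pderiv_multi \<beta> f) \<gamma> =
    (\<Prod>i\<in>Poly_Mapping.keys \<beta>. fact (Poly_Mapping.lookup \<gamma> i + Poly_Mapping.lookup \<beta> i)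
      / fact (Poly_Mapping.lookup \<gamma> i)) * Poly_Mapping.lookup f (\<gamma> + \<beta>)"
proof -
  let ?c = "\<lambda>\<gamma>. (\<Prod>i\<in>Poly_Mapping.keys \<beta>. fact (Poly_Mapping.lookup \<gamma> i + Poly_Mapping.lookup \<beta> i)
      / fact (Poly_Mapping.lookup \<gamma> i)) * Poly_Mapping.lookup f (\<gamma> + \<beta>) :: real"
  have "{\<gamma>. ?c \<gamma> \<noteq> 0} \<subseteq> (\<lambda>\<delta>. \<delta> - \<beta>) ` Poly_Mapping.keys f"
  proof
    fix \<gamma> assume "\<gamma> \<in> {\<gamma>. ?c \<gamma> \<noteq> 0}"
    then have "\<gamma> + \<beta> \<in> Poly_Mapping.keys f" by (auto simp: in_keys_iff)
    then show "\<gamma> \<in> (\<lambda>\<delta>. \<delta> - \<beta>) ` Poly_Mapping.keys f" by (intro image_eqI[of _ _ "\<gamma> + \<beta>"]) auto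
  qed
  then have "finite {\<gamma>. ?c \<gamma> \<noteq> 0}"
    by (rule finite_subset) auto
  then show ?thesis
    unfolding pderiv_multi_def by (simp add: lookup_Abs_poly_mapping)
qed

lemma lookup_pderiv_multi_eq_0_iff:
  "Poly_Mapping.lookup (pderiv_multi \<beta> f) \<gamma> = 0 \<longleftrightarrow> Poly_Mapping.lookup f (\<gamma> + \<beta>) = 0"
proof -
  have "(\<Prod>i\<in>Poly_Mapping.keys \<beta>. fact (Poly_Mapping.lookup \<gamma> i + Poly_Mapping.lookup \<beta> i)
      / fact (Poly_Mapping.lookup \<gamma> i) :: real) > 0"
    by (auto intro!: prod_pos)
  then show ?thesis
    by (simp add: lookup_pderiv_multi)
qed

lemma pderiv_multi_monom_of_eq_0:
  assumes "Poly_Mapping.lookup \<alpha> i < Poly_Mapping.lookup \<beta> i"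
  shows "pderiv_multi \<beta> (monom_of \<alpha>) = 0"
proof (rule poly_mapping_eqI)
  fix \<gamma>
  have "\<gamma> + \<beta> \<noteq> \<alpha>"
    using assms by (auto simp: lookup_add)
  then show "Poly_Mapping.lookup (pderiv_multi \<beta> (monom_of \<alpha>)) \<gamma> = Poly_Mapping.lookup 0 \<gamma>"
    by (simp add: lookup_pderiv_multi_eq_0_iff monom_of_def lookup_single)
qed

lemma card_divisors_of_degree_le_dim_partials_eq:
  assumes "in_vars n f" "\<alpha> \<in> Poly_Mapping.keys f" and max: "\<And>\<gamma>. \<gamma> \<in> Poly_Mapping.keys f \<Longrightarrow> \<gamma> \<le> \<alpha>"
  shows "card (divisors_of_degree k \<alpha>) \<le> dim (partials_eq n k f)"
proof -
  let ?D = "divisors_of_degree k \<alpha>"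
  let ?G = "{pderiv_multi \<beta> f | \<beta>. Poly_Mapping.keys \<beta> \<subseteq> {..<n} \<and> mdeg \<beta> = k}"
  have diag: "Poly_Mapping.lookup (pderiv_multi \<beta> f) (\<alpha> - \<beta>) \<noteq> 0" if "\<beta> \<in> ?D" for \<beta>
    using assms(2) diff_add_divisor[OF that] by (simp add: lookup_pderiv_multi_eq_0_iff in_keys_iff)
  have upper: "Poly_Mapping.lookup (pderiv_multi \<beta>' f) (\<alpha> - \<beta>) = 0" if "\<beta> \<in> ?D" "\<beta> < \<beta>'" for \<beta> \<beta>'
  proof -
    have "\<alpha> = \<alpha> - \<beta> + \<beta>"
      using diff_add_divisor[OF that(1)] by simp
    also have "\<dots> < \<alpha> - \<beta> + \<beta>'"
      using that(2) by (rule add_strict_left_mono)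
    finally have "\<alpha> - \<beta> + \<beta>' \<notin> Poly_Mapping.keys f"
      using max leD by blast
    then show ?thesis
      by (simp add: lookup_pderiv_multi_eq_0_iff in_keys_iff)
  qed
  note triangular = independent_triangular_family[of ?D "\<lambda>\<beta>. pderiv_multi \<beta> f" "\<lambda>\<beta>. \<alpha> - \<beta>", OF diag upper]
  have "Poly_Mapping.keys \<alpha> \<subseteq> {..<n}"
    using assms(1,2) unfolding in_vars_def by blast
  then have "Poly_Mapping.keys \<beta> \<subseteq> {..<n} \<and> mdeg \<beta> = k" if "\<beta> \<in> ?D" for \<beta>
    using keys_subset_if_divisor[OF that] that unfolding divisors_of_degree_def by auto
  then have "(\<lambda>\<beta>. pderiv_multi \<beta> f) ` ?D \<subseteq> ?G"
    by blast
  then have "(\<lambda>\<beta>. pderiv_multi \<beta> f) ` ?D \<subseteq> span ?G"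
    using span_superset by (rule order.trans)
  then have "card ((\<lambda>\<beta>. pderiv_multi \<beta> f) ` ?D) \<le> dim ?G"
    using finite_image_set[OF finite_exponents_of_degree] triangular(2)
    by (intro card_le_dim_if_independent_in_span)
  then show ?thesis
    by (simp only: partials_eq_def real_vector.dim_span card_image[OF triangular(1)])
qed

lemma dim_partials_eq_monom_of_le_card_divisors_of_degree:
  "dim (partials_eq n k (monom_of \<alpha>)) \<le> card (divisors_of_degree k \<alpha>)"
proof -
  let ?d = "\<lambda>\<beta>. pderiv_multi \<beta> (monom_of \<alpha>)"
  have "?d \<beta> \<in> span (?d ` divisors_of_degree k \<alpha>)" if deg: "mdeg \<beta> = k" for \<beta>
  proof (cases "\<beta> \<in> divisors_of_degree k \<alpha>")
    case False
    then obtain i where "Poly_Mapping.lookup \<alpha> i < Poly_Mapping.lookup \<beta> i"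
      using deg unfolding divisors_of_degree_def by (auto simp: not_le)
    then show ?thesis
      by (simp add: pderiv_multi_monom_of_eq_0 span_zero)
  qed (simp add: span_base)
  then have "dim (partials_eq n k (monom_of \<alpha>)) \<le> card (?d ` divisors_of_degree k \<alpha>)"
    unfolding partials_eq_def real_vector.dim_span
    by (intro real_vector.dim_le_card finite_imageI finite_divisors_of_degree) auto
  also have "\<dots> \<le> card (divisors_of_degree k \<alpha>)"
    by (rule card_image_le[OF finite_divisors_of_degree])
  finally show ?thesis .
qed

theorem theorem1:
  fixes n :: nat and f :: rpoly
  assumes "in_vars n f" and "f \<noteq> 0"
  shows "(\<exists>\<gamma>\<in>Poly_Mapping.keys f. \<forall>k::nat. dim (partials_eq n k f) \<ge> dim (partials_eq n k (monom_of \<gamma>)))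
    \<and> (\<forall>r::nat. (\<forall>\<gamma>\<in>Poly_Mapping.keys f. card (Poly_Mapping.keys \<gamma>) \<ge> r) \<longrightarrow>
          (\<forall>k::nat. dim (partials_eq n k f) \<ge> r choose k))"
proof -
  define \<alpha> where "\<alpha> = Max (Poly_Mapping.keys f)"
  have \<alpha>: "\<alpha> \<in> Poly_Mapping.keys f"
    unfolding \<alpha>_def using assms(2) by (intro Max_in) auto
  have divisors_le_dim: "card (divisors_of_degree k \<alpha>) \<le> dim (partials_eq n k f)" for k
    using card_divisors_of_degree_le_dim_partials_eq[OF assms(1) \<alpha>] by (simp add: \<alpha>_def)
  have "r choose k \<le> dim (partials_eq n k f)"
    if "\<forall>\<gamma>\<in>Poly_Mapping.keys f. card (Poly_Mapping.keys \<gamma>) \<ge> r" for r k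
  proof -
    have "r choose k \<le> card (Poly_Mapping.keys \<alpha>) choose k"
      using that \<alpha> by (intro binomial_right_mono) blast
    also have "\<dots> \<le> card (divisors_of_degree k \<alpha>)"
      by (rule binomial_le_card_divisors_of_degree)
    finally show ?thesis
      using divisors_le_dim order_trans by blast
  qed
  moreover have "dim (partials_eq n k (monom_of \<alpha>)) \<le> dim (partials_eq n k f)" for k
    using dim_partials_eq_monom_of_le_card_divisors_of_degree divisors_le_dim order_trans by blast
  ultimately show ?thesis
    using \<alpha> by blast
qed

end
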